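(* Let $X$ be a finite set and let $c$ be a choice correspondence on $X$ that admits a minimal compromise representation. Then $c$ satisfies axiom $\gamma$: for all menus $A,B$, if $x\in c(A)\cap c(B)$ then $x\in c(A\cup B)$; and $c$ satisfies No Binary Cycles: for all $x,y,z\in X$, if $x\in c(\{x,y\})$ and $y\in c(\{y,z\})$, then $x\in c(\{x,z\})$.
   Context: A menu is a nonempty subset of $X$. A choice correspondence is a map $c$ assigning to each menu $A$ a nonempty subset $c(A)\subseteq A$. A weak order is a complete and transitive binary relation on $X$; a linear order is an antisymmetric weak order. For a weak order $R$ and menu $A$, $\max(A,R)=\{x\in A: xRy \text{ for all } y\in A\}$. For a linear order $L$, $\min(A,L)$ denotes the unique $x\in A$ with $yLx$ for all $y\in A$. A choice correspondence $c$ admits a minimal compromise representation if there exist a weak order $R$ and a linear order $L$ on $X$ such that for every menu $A$: $c(A)=\max(A,R)$ if $\max(A,R)$ is a singleton, and $c(A)=\max(A,R)\setminus\{\min(\max(A,R),L)\}$ otherwise. *)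

theory Defs
  imports Main
begin

definition menu :: "'a set \<Rightarrow> 'a set \<Rightarrow> bool" where
  "menu X A \<longleftrightarrow> A \<subseteq> X \<and> A \<noteq> {}"

definition choice_correspondence :: "'a set \<Rightarrow> ('a set \<Rightarrow> 'a set) \<Rightarrow> bool" where
  "choice_correspondence X c \<longleftrightarrow>
     (\<forall>A. menu X A \<longrightarrow> c A \<subseteq> A \<and> c A \<noteq> {})"

definition weak_order_on :: "'a set \<Rightarrow> 'a rel \<Rightarrow> bool" where
  "weak_order_on X R \<longleftrightarrow> R \<subseteq> X \<times> X \<and>
     (\<forall>x\<in>X. \<forall>y\<in>X. (x, y) \<in> R \<or> (y, x) \<in> R) \<and> trans R"

definition linear_order_on' :: "'a set \<Rightarrow> 'a rel \<Rightarrow> bool" where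
  "linear_order_on' X L \<longleftrightarrow> weak_order_on X L \<and> antisym L"

definition maxR :: "'a set \<Rightarrow> 'a rel \<Rightarrow> 'a set" where
  "maxR A R = {x \<in> A. \<forall>y\<in>A. (x, y) \<in> R}"

definition minL :: "'a set \<Rightarrow> 'a rel \<Rightarrow> 'a" where
  "minL A L = (THE x. x \<in> A \<and> (\<forall>y\<in>A. (y, x) \<in> L))"

definition minimal_compromise_rep :: "'a set \<Rightarrow> ('a set \<Rightarrow> 'a set) \<Rightarrow> 'a rel \<Rightarrow> 'a rel \<Rightarrow> bool" where
  "minimal_compromise_rep X c R L \<longleftrightarrow> weak_order_on X R \<and> linear_order_on' X L \<and>
     (\<forall>A. menu X A \<longrightarrow>
        c A = (if card (maxR A R) = 1 then maxR A R
               else maxR A R - {minL (maxR A R) L}))"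

definition admits_mcr :: "'a set \<Rightarrow> ('a set \<Rightarrow> 'a set) \<Rightarrow> bool" where
  "admits_mcr X c \<longleftrightarrow> (\<exists>R L. minimal_compromise_rep X c R L)"

end

theory Submission
  imports Defs
begin

text \<open>An alternative is chosen from a menu iff it is R-maximal and either the unique maximal
  element or not the L-least maximal element. If x is chosen from A and from B, the maximal
  elements of A \<union> B are those of A together with those of B, and a witness that x is not
  L-least among the maximal elements of A or of B survives in the union. For binary menus,
  x \<in> c {x, z} says that x R z, and x L z in case of indifference; chaining indifferences by
  transitivity of R and preferences by transitivity of L excludes binary cycles.\<close>

lemma weak_order_on_refl:
  assumes "weak_order_on X R" "x \<in> X"
  shows "(x, x) \<in> R"
  using assms unfolding weak_order_on_def by blast

lemma weak_order_on_finite_has_min: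
  assumes L: "weak_order_on X L" and "finite M" "M \<noteq> {}" "M \<subseteq> X"
  shows "\<exists>m\<in>M. \<forall>y\<in>M. (y, m) \<in> L"
  using assms(2-4)
proof (induction M rule: finite_ne_induct)
  case (singleton x)
  then show ?case using weak_order_on_refl[OF L] by auto
next
  case (insert x F)
  then obtain m where m: "m \<in> F" "\<forall>y\<in>F. (y, m) \<in> L" by auto
  have "(x, m) \<in> L \<or> (m, x) \<in> L" "(x, x) \<in> L"
    using L insert m unfolding weak_order_on_def by auto
  moreover have "trans L" using L unfolding weak_order_on_def by blast
  ultimately show ?case using m by (auto dest: transD)
qed

lemma minL_eqI:
  assumes "antisym L" "x \<in> M" "\<forall>y\<in>M. (y, x) \<in> L"
  shows "minL M L = x"
  unfolding minL_def
  by (rule the_equality) (use assms in \<open>auto dest: antisymD\<close>)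

lemma minL_eq_iff:
  assumes L: "linear_order_on' X L" and "finite M" "M \<subseteq> X" "x \<in> M"
  shows "minL M L = x \<longleftrightarrow> (\<forall>y\<in>M. (y, x) \<in> L)"
proof -
  have "antisym L" using L unfolding linear_order_on'_def by blast
  obtain m where m: "m \<in> M" "\<forall>y\<in>M. (y, m) \<in> L"
    using weak_order_on_finite_has_min assms unfolding linear_order_on'_def by blast
  then have "minL M L = m" using \<open>antisym L\<close> by (blast intro: minL_eqI)
  then show ?thesis using m minL_eqI[OF \<open>antisym L\<close> \<open>x \<in> M\<close>] by auto
qed

lemma maxR_Un:
  assumes "trans R" "x \<in> maxR A R" "x \<in> maxR B R"
  shows "maxR (A \<union> B) R = maxR A R \<union> maxR B R"
  using assms unfolding maxR_def by (auto dest: transD)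

lemma maxR_pair:
  assumes "weak_order_on X R" "x \<in> X" "z \<in> X" "(x, z) \<in> R"
  shows "maxR {x, z} R = (if (z, x) \<in> R then {x, z} else {x})"
  using assms weak_order_on_refl[OF assms(1)] unfolding maxR_def by auto

lemma minimal_compromise_rep_mem_iff:
  assumes rep: "minimal_compromise_rep X c R L" and "finite X" and A: "menu X A"
  shows "x \<in> c A \<longleftrightarrow> x \<in> maxR A R \<and> (maxR A R = {x} \<or> (\<exists>y\<in>maxR A R. (y, x) \<notin> L))"
proof -
  define M where "M = maxR A R"
  have L: "linear_order_on' X L"
    and cA: "c A = (if card M = 1 then M else M - {minL M L})"
    using rep A unfolding minimal_compromise_rep_def M_def by auto
  have "M \<subseteq> X" using A unfolding M_def maxR_def menu_def by auto
  have "finite M" using \<open>finite X\<close> \<open>M \<subseteq> X\<close> by (rule finite_subset[rotated])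
  have "x \<in> c A \<longleftrightarrow> x \<in> M \<and> (M = {x} \<or> (\<exists>y\<in>M. (y, x) \<notin> L))"
  proof (cases "x \<in> M \<and> M \<noteq> {x}")
    case True
    then have "card M \<noteq> 1" by (auto simp: card_1_singleton_iff)
    then show ?thesis
      using cA True minL_eq_iff[OF L \<open>finite M\<close> \<open>M \<subseteq> X\<close>] by auto
  next
    case False
    then show ?thesis using cA by auto
  qed
  then show ?thesis unfolding M_def .
qed

lemma minimal_compromise_rep_pair_iff:
  assumes rep: "minimal_compromise_rep X c R L" and "finite X" "x \<in> X" "z \<in> X"
  shows "x \<in> c {x, z} \<longleftrightarrow> (x, z) \<in> R \<and> ((z, x) \<in> R \<longrightarrow> (x, z) \<in> L)"
proof -
  have R: "weak_order_on X R" and L: "linear_order_on' X L"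
    using rep unfolding minimal_compromise_rep_def by auto
  have "menu X {x, z}" using assms unfolding menu_def by auto
  then have mem_iff: "x \<in> c {x, z} \<longleftrightarrow>
      x \<in> maxR {x, z} R \<and> (maxR {x, z} R = {x} \<or> (\<exists>y\<in>maxR {x, z} R. (y, x) \<notin> L))"
    using minimal_compromise_rep_mem_iff[OF rep \<open>finite X\<close>] by blast
  have x_max_iff: "x \<in> maxR {x, z} R \<longleftrightarrow> (x, z) \<in> R"
    using weak_order_on_refl[OF R \<open>x \<in> X\<close>] unfolding maxR_def by auto
  have L_refl: "(x, x) \<in> L"
    using L \<open>x \<in> X\<close> unfolding linear_order_on'_def by (auto intro: weak_order_on_refl)
  show ?thesis
  proof (cases "(x, z) \<in> R \<and> (z, x) \<in> R \<and> x \<noteq> z")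
    case True
    then have "maxR {x, z} R = {x, z}" using maxR_pair[OF R \<open>x \<in> X\<close> \<open>z \<in> X\<close>] by simp
    then have "x \<in> c {x, z} \<longleftrightarrow> (z, x) \<notin> L"
      using mem_iff x_max_iff True L_refl by auto
    also have "\<dots> \<longleftrightarrow> (x, z) \<in> L"
      using L True \<open>x \<in> X\<close> \<open>z \<in> X\<close> unfolding linear_order_on'_def weak_order_on_def
      by (auto dest: antisymD)
    finally show ?thesis using True by blast
  next
    case False
    have "maxR {x, z} R = {x}" if "(x, z) \<in> R"
      using that False maxR_pair[OF R \<open>x \<in> X\<close> \<open>z \<in> X\<close>] by auto
    then show ?thesis using mem_iff x_max_iff False L_refl by auto
  qed
qed

lemma minimal_compromise_rep_gamma:
  assumes rep: "minimal_compromise_rep X c R L" and "finite X"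
    and A: "menu X A" and B: "menu X B" and x: "x \<in> c A" "x \<in> c B"
  shows "x \<in> c (A \<union> B)"
proof -
  note mem_iff = minimal_compromise_rep_mem_iff[OF rep \<open>finite X\<close>]
  have AB: "menu X (A \<union> B)" using A B unfolding menu_def by auto
  have "trans R"
    using rep unfolding minimal_compromise_rep_def weak_order_on_def by blast
  have xA: "x \<in> maxR A R" "maxR A R = {x} \<or> (\<exists>y\<in>maxR A R. (y, x) \<notin> L)"
    using x(1) mem_iff[OF A] by blast+
  have xB: "x \<in> maxR B R" "maxR B R = {x} \<or> (\<exists>y\<in>maxR B R. (y, x) \<notin> L)"
    using x(2) mem_iff[OF B] by blast+
  have "x \<in> maxR A R \<union> maxR B R \<and>
      (maxR A R \<union> maxR B R = {x} \<or> (\<exists>y\<in>maxR A R \<union> maxR B R. (y, x) \<notin> L))"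
    using xA xB by blast
  then show ?thesis
    unfolding mem_iff[OF AB] maxR_Un[OF \<open>trans R\<close> xA(1) xB(1)] .
qed

lemma minimal_compromise_rep_no_binary_cycles:
  assumes rep: "minimal_compromise_rep X c R L" and "finite X"
    and X: "x \<in> X" "y \<in> X" "z \<in> X" and "x \<in> c {x, y}" "y \<in> c {y, z}"
  shows "x \<in> c {x, z}"
proof -
  note pair_iff = minimal_compromise_rep_pair_iff[OF rep \<open>finite X\<close>]
  have "trans R" "trans L"
    using rep unfolding minimal_compromise_rep_def linear_order_on'_def weak_order_on_def by auto
  have xy: "(x, y) \<in> R" "(y, x) \<in> R \<Longrightarrow> (x, y) \<in> L"
    using \<open>x \<in> c {x, y}\<close> pair_iff[OF X(1,2)] by blast+
  have yz: "(y, z) \<in> R" "(z, y) \<in> R \<Longrightarrow> (y, z) \<in> L"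
    using \<open>y \<in> c {y, z}\<close> pair_iff[OF X(2,3)] by blast+
  have "(x, z) \<in> R" using transD[OF \<open>trans R\<close> xy(1) yz(1)] .
  moreover have "(x, z) \<in> L" if zx: "(z, x) \<in> R"
  proof -
    have "(y, x) \<in> R" using transD[OF \<open>trans R\<close> yz(1) zx] .
    moreover have "(z, y) \<in> R" using transD[OF \<open>trans R\<close> zx xy(1)] .
    ultimately show ?thesis using transD[OF \<open>trans L\<close>] xy(2) yz(2) by blast
  qed
  ultimately show ?thesis using pair_iff[OF X(1,3)] by blast
qed

theorem lemma2:
  fixes X :: "'a set" and c :: "'a set \<Rightarrow> 'a set"
  assumes "finite X"
    and "choice_correspondence X c"
    and "admits_mcr X c"
  shows "(\<forall>A B x. menu X A \<longrightarrow> menu X B \<longrightarrow> x \<in> c A \<inter> c B \<longrightarrow> x \<in> c (A \<union> B))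
       \<and> (\<forall>x\<in>X. \<forall>y\<in>X. \<forall>z\<in>X. x \<in> c {x, y} \<longrightarrow> y \<in> c {y, z} \<longrightarrow> x \<in> c {x, z})"
proof -
  obtain R L where rep: "minimal_compromise_rep X c R L"
    using \<open>admits_mcr X c\<close> unfolding admits_mcr_def by blast
  show ?thesis
    using minimal_compromise_rep_gamma[OF rep \<open>finite X\<close>]
      minimal_compromise_rep_no_binary_cycles[OF rep \<open>finite X\<close>] by blast
qed

end
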